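(* Let $\varepsilon\in(0,1)$ and let $\mu=\mu(n)$ be sub-exponential in $n$ (i.e. $\mu=e^{o(n)}$). Let $P_0$ be a population of $\mu$ independent uniformly random points of $\{0,1\}^n$ and $Z_0:=\max\{0,\tau^{n-f_0}-g(P_0)\}$. Then for $n$ sufficiently large, \[E[Z_0]\ge\tfrac12\,\tau^{n-f_0}.\]
   Context: $f$ is OneMax, $f(x)=\sum_i x_i$. Potential: $\tau=\frac{4e}{\varepsilon}$, $\alpha=1-\frac1\tau\ln\big(1+\frac1\tau\big)$, $f_0=\lceil\alpha n\rceil$, $g(x)=\tau^{f(x)-f_0}$ if $f(x)\ge f_0$ and $g(x)=0$ otherwise; for a population (multiset) $P$, $g(P)=\sum_{x\in P}g(x)$. *)

theory Defs
  imports "HOL-Probability.Probability" "HOL-Library.Landau_Symbols"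
begin

definition bitstrings :: "nat \<Rightarrow> bool list set" where
  "bitstrings n = {xs. length xs = n}"

definition onemax :: "bool list \<Rightarrow> nat" where
  "onemax xs = length (filter id xs)"

definition tau :: "real \<Rightarrow> real" where
  "tau eps = 4 * exp 1 / eps"

definition alpha :: "real \<Rightarrow> real" where
  "alpha eps = 1 - (1 / tau eps) * ln (1 + 1 / tau eps)"

definition f0 :: "real \<Rightarrow> nat \<Rightarrow> int" where
  "f0 eps n = \<lceil>alpha eps * real n\<rceil>"

definition gpot :: "real \<Rightarrow> nat \<Rightarrow> bool list \<Rightarrow> real" where
  "gpot eps n x = (if int (onemax x) \<ge> f0 eps n
                   then tau eps powr (real (onemax x) - real_of_int (f0 eps n)) else 0)"

text \<open>Potential of a population (a multiset, represented as a list).\<close>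
definition gpop :: "real \<Rightarrow> nat \<Rightarrow> bool list list \<Rightarrow> real" where
  "gpop eps n P = (\<Sum>x\<leftarrow>P. gpot eps n x)"

text \<open>Population of m independent uniform points of {0,1}^n:
  uniform distribution on lists of length m of bit strings of length n.\<close>
definition init_pop :: "nat \<Rightarrow> nat \<Rightarrow> bool list list pmf" where
  "init_pop n m = pmf_of_set {P. length P = m \<and> set P \<subseteq> bitstrings n}"

definition Z0 :: "real \<Rightarrow> nat \<Rightarrow> bool list list \<Rightarrow> real" where
  "Z0 eps n P = max 0 (tau eps powr (real n - real_of_int (f0 eps n)) - gpop eps n P)"

end

theory Submission
  imports Defs
begin

text \<open>Since \<open>g(x) \<le> \<tau>\<^bsup>f(x) - f\<^sub>0\<^esup>\<close>, a uniform point has expected potential at most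
  \<open>\<tau>\<^bsup>-f\<^sub>0\<^esup> ((1 + \<tau>)/2)\<^sup>n = \<tau>\<^bsup>n - f\<^sub>0\<^esup> ((1 + \<tau>)/(2\<tau>))\<^sup>n\<close>.
  As \<open>\<tau> > 1\<close> the ratio \<open>(1 + \<tau>)/(2\<tau>)\<close> is below 1, so linearity of expectation bounds
  \<open>E[g(P\<^sub>0)]\<close> by \<open>\<mu>\<close> times an exponentially small fraction of \<open>\<tau>\<^bsup>n - f\<^sub>0\<^esup>\<close>; a sub-exponential
  \<open>\<mu>\<close> cannot compensate, and \<open>Z\<^sub>0 \<ge> \<tau>\<^bsup>n - f\<^sub>0\<^esup> - g(P\<^sub>0)\<close> gives the claim.\<close>

lemma bitstrings_Suc:
  "bitstrings (Suc n) = Cons True ` bitstrings n \<union> Cons False ` bitstrings n"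
  unfolding bitstrings_def by (auto simp: length_Suc_conv image_iff)

lemma finite_bitstrings: "finite (bitstrings n)"
  by (induction n) (simp_all add: bitstrings_def bitstrings_Suc[unfolded bitstrings_def])

lemma sum_power_onemax_bitstrings:
  fixes t :: "'a :: comm_semiring_1"
  shows "(\<Sum>x\<in>bitstrings n. t ^ onemax x) = (1 + t) ^ n"
proof (induction n)
  case 0
  have "bitstrings 0 = {[]}" by (auto simp: bitstrings_def)
  then show ?case by (simp add: onemax_def)
next
  case (Suc n)
  have "(\<Sum>x\<in>bitstrings (Suc n). t ^ onemax x)
      = (\<Sum>x\<in>Cons True ` bitstrings n. t ^ onemax x) + (\<Sum>x\<in>Cons False ` bitstrings n. t ^ onemax x)"
    unfolding bitstrings_Suc by (rule sum.union_disjoint) (auto simp: finite_bitstrings)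
  also have "\<dots> = t * (\<Sum>x\<in>bitstrings n. t ^ onemax x) + (\<Sum>x\<in>bitstrings n. t ^ onemax x)"
    by (simp add: sum.reindex onemax_def sum_distrib_left)
  finally show ?case using Suc by (simp add: algebra_simps)
qed

lemma card_bitstrings: "card (bitstrings n) = 2 ^ n"
  using sum_power_onemax_bitstrings[of "1::nat" n] by (simp add: numeral_2_eq_2)

lemma bitstrings_nonempty: "bitstrings n \<noteq> {}"
  by (auto simp: bitstrings_def intro!: exI[of _ "replicate n False"])

lemma lists_length_eq_nonempty: "A \<noteq> {} \<Longrightarrow> {xs. set xs \<subseteq> A \<and> length xs = m} \<noteq> {}"
  by (auto intro!: exI[of _ "replicate m (SOME a. a \<in> A)"] some_in_eq[THEN iffD2])

lemma sum_sum_list_lists_length_eq: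
  fixes h :: "'a \<Rightarrow> real"
  assumes "finite A"
  shows "real (card A) * (\<Sum>P\<in>{xs. set xs \<subseteq> A \<and> length xs = m}. sum_list (map h P))
         = real m * real (card A) ^ m * sum h A"
proof (induction m)
  case 0 then show ?case by simp
next
  case (Suc m)
  let ?S = "{xs. set xs \<subseteq> A \<and> length xs = m}"
  have "(\<Sum>P\<in>{xs. set xs \<subseteq> A \<and> length xs = Suc m}. sum_list (map h P))
      = (\<Sum>(xs, a)\<in>?S \<times> A. sum_list (map h (a # xs)))"
    unfolding lists_length_Suc_eq
    by (subst sum.reindex) (auto simp: inj_on_def split_def)
  also have "\<dots> = (\<Sum>xs\<in>?S. sum h A + real (card A) * sum_list (map h xs))"
    by (simp add: sum.cartesian_product[symmetric] sum.distrib)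
  also have "\<dots> = real (card A) ^ m * sum h A + real (card A) * (\<Sum>xs\<in>?S. sum_list (map h xs))"
    by (simp add: sum.distrib sum_distrib_left card_lists_length_eq[OF assms])
  finally show ?case using Suc by (simp add: algebra_simps)
qed

lemma expectation_sum_list_uniform_lists:
  fixes h :: "'a \<Rightarrow> real"
  assumes "finite A" "A \<noteq> {}"
  shows "measure_pmf.expectation (pmf_of_set {xs. set xs \<subseteq> A \<and> length xs = m})
           (\<lambda>P. sum_list (map h P)) = real m * (sum h A / real (card A))"
proof -
  let ?S = "{xs. set xs \<subseteq> A \<and> length xs = m}"
  have cardA: "0 < real (card A)" using assms by (simp add: card_gt_0_iff)
  have cardS: "real (card ?S) = real (card A) ^ m" by (simp add: card_lists_length_eq[OF assms(1)])
  have "measure_pmf.expectation (pmf_of_set ?S) (\<lambda>P. sum_list (map h P))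
      = (\<Sum>P\<in>?S. sum_list (map h P)) / real (card A) ^ m"
    using integral_pmf_of_set[OF lists_length_eq_nonempty[OF assms(2)] finite_lists_length_eq[OF assms(1)]]
      cardS by simp
  also have "\<dots> = real m * (sum h A / real (card A))"
    using sum_sum_list_lists_length_eq[OF assms(1), where m = m and h = h] cardA
    by (simp add: field_simps)
  finally show ?thesis .
qed

lemma init_pop_eq: "init_pop n m = pmf_of_set {xs. set xs \<subseteq> bitstrings n \<and> length xs = m}"
  unfolding init_pop_def by (metis (lifting) conj_commute)

lemma finite_set_pmf_init_pop: "finite (set_pmf (init_pop n m))"
  unfolding init_pop_eq
  by (simp add: set_pmf_of_set[OF lists_length_eq_nonempty[OF bitstrings_nonempty]
        finite_lists_length_eq[OF finite_bitstrings]] finite_lists_length_eq[OF finite_bitstrings])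

lemma tau_gt_1:
  assumes "0 < eps" "eps < 4 * exp 1"
  shows "1 < tau eps"
  using assms by (simp add: tau_def)

lemma gpot_le_power:
  assumes "1 < tau eps"
  shows "gpot eps n x \<le> tau eps powr (- real_of_int (f0 eps n)) * tau eps ^ onemax x"
proof -
  have "tau eps powr (real (onemax x) - real_of_int (f0 eps n))
      = tau eps powr (- real_of_int (f0 eps n)) * tau eps ^ onemax x"
    using assms by (simp add: powr_add[symmetric] powr_realpow[symmetric])
  then show ?thesis using assms by (simp add: gpot_def)
qed

lemma expectation_gpop_le:
  assumes "1 < tau eps"
  shows "measure_pmf.expectation (init_pop n m) (gpop eps n)
           \<le> real m * ((1 + tau eps) / (2 * tau eps)) ^ n
               * tau eps powr (real n - real_of_int (f0 eps n))"
proof -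
  let ?t = "tau eps" and ?c = "tau eps powr (- real_of_int (f0 eps n))"
  have "gpop eps n P \<le> ?c * sum_list (map (\<lambda>x. ?t ^ onemax x) P)" for P
    unfolding gpop_def sum_list_const_mult[symmetric]
    by (rule sum_list_mono) (rule gpot_le_power[OF assms])
  then have "measure_pmf.expectation (init_pop n m) (gpop eps n)
      \<le> measure_pmf.expectation (init_pop n m) (\<lambda>P. ?c * sum_list (map (\<lambda>x. ?t ^ onemax x) P))"
    by (intro integral_mono integrable_measure_pmf_finite finite_set_pmf_init_pop)
  also have "\<dots> = ?c * (real m * ((1 + ?t) / 2) ^ n)"
    unfolding init_pop_eq
    by (simp add: expectation_sum_list_uniform_lists finite_bitstrings bitstrings_nonempty
        sum_power_onemax_bitstrings card_bitstrings power_divide)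
  also have "\<dots> = real m * ((1 + ?t) / (2 * ?t)) ^ n * (?c * ?t ^ n)"
    using assms by (simp add: power_divide field_simps)
  also have "?c * ?t ^ n = ?t powr (real n - real_of_int (f0 eps n))"
    using assms by (simp add: powr_add[symmetric] powr_realpow[symmetric])
  finally show ?thesis .
qed

lemma expectation_Z0_ge:
  "measure_pmf.expectation (init_pop n m) (Z0 eps n)
     \<ge> tau eps powr (real n - real_of_int (f0 eps n))
         - measure_pmf.expectation (init_pop n m) (gpop eps n)"
proof -
  let ?T = "tau eps powr (real n - real_of_int (f0 eps n))"
  have "measure_pmf.expectation (init_pop n m) (\<lambda>P. ?T - gpop eps n P)
      \<le> measure_pmf.expectation (init_pop n m) (Z0 eps n)"
    by (intro integral_mono integrable_measure_pmf_finite finite_set_pmf_init_pop) (simp add: Z0_def)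
  then show ?thesis
    by (simp add: Bochner_Integration.integral_diff integrable_measure_pmf_finite
        finite_set_pmf_init_pop)
qed

lemma subexponential_times_geometric_eventually_le:
  fixes mu :: "nat \<Rightarrow> nat" and r C :: real
  assumes "0 < r" "r < 1" "0 < C"
    and "(\<lambda>n. ln (real (mu n))) \<in> o(\<lambda>n. real n)"
  shows "\<forall>\<^sub>F n in sequentially. real (mu n) * r ^ n \<le> C"
proof -
  define d where "d = - ln r / 2"
  have "0 < d" using assms by (simp add: d_def)
  have "\<forall>\<^sub>F n in sequentially. ln (real (mu n)) \<le> d * real n"
    using landau_o.smallD[OF assms(4) \<open>0 < d\<close>] by (auto elim: eventually_mono)
  moreover have "\<forall>\<^sub>F n in sequentially. - ln C / d \<le> real n"
    by real_asymp
  ultimately show ?thesis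
  proof eventually_elim
    case (elim n)
    show ?case
    proof (cases "mu n = 0")
      case False
      have "ln (real (mu n) * r ^ n) = ln (real (mu n)) + real n * ln r"
        using False assms(1) by (simp add: ln_mult ln_realpow)
      also have "\<dots> \<le> - d * real n"
        using elim(1) unfolding d_def by (simp add: algebra_simps)
      also have "\<dots> \<le> ln C"
        using elim(2) \<open>0 < d\<close> by (simp add: field_simps)
      finally show ?thesis
        using False assms(1,3) by (simp add: ln_le_cancel_iff)
    qed (use assms in simp)
  qed
qed

theorem lemma4:
  fixes eps :: real and mu :: "nat \<Rightarrow> nat"
  assumes "0 < eps" "eps < 1"
    and "(\<lambda>n. ln (real (mu n))) \<in> o(\<lambda>n. real n)"
  shows "\<forall>\<^sub>F n in sequentially.
           measure_pmf.expectation (init_pop n (mu n)) (Z0 eps n)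
             \<ge> 1/2 * tau eps powr (real n - real_of_int (f0 eps n))"
proof -
  let ?t = "tau eps"
  have "1 < ?t"
    using assms(1,2) exp_ge_add_one_self[of 1] by (intro tau_gt_1) auto
  then have "\<forall>\<^sub>F n in sequentially. real (mu n) * ((1 + ?t) / (2 * ?t)) ^ n \<le> 1/2"
    by (intro subexponential_times_geometric_eventually_le assms(3)) (auto simp: field_simps)
  then show ?thesis
  proof eventually_elim
    case (elim n)
    let ?T = "?t powr (real n - real_of_int (f0 eps n))"
    have "measure_pmf.expectation (init_pop n (mu n)) (gpop eps n) \<le> 1/2 * ?T"
      using expectation_gpop_le[OF \<open>1 < ?t\<close>, of n "mu n"] mult_right_mono[OF elim, of ?T]
      by simp
    then show ?case
      using expectation_Z0_ge[where n = n and m = "mu n" and eps = eps] by simp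
  qed
qed

end
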